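(* Let $n\ge2$ and let $R=\frac1n E_n$ be the $n\times n$ comonotone checkerboard copula ($E_n$ the identity matrix). For every $n\times n$ checkerboard copula $P\neq R$, the function $\alpha\mapsto\tau(\alpha R+(1-\alpha)P)$ is strictly increasing on $[0,1]$.
   Context: An $n\times n$ checkerboard copula is a real $n\times n$ matrix with nonnegative entries whose row and column sums all equal $\frac1n$. $\Xi=(\xi_{ij})$ with $\xi_{ij}=1$ if $i=j$, $2$ if $i>j$, $0$ if $i<j$. For an $n\times n$ matrix $M$, $\tau(M)=1-\mathrm{tr}(\Xi M\Xi M^\top)$ (Kendall's $\tau$ of a checkerboard copula). *)

theory Defs
  imports Complex_Main
begin

text \<open>n x n real matrices are represented as functions nat => nat => real,
  only the entries with indices i, j < n being relevant (indices 0..n-1).\<close>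

definition checkerboard_copula :: "nat \<Rightarrow> (nat \<Rightarrow> nat \<Rightarrow> real) \<Rightarrow> bool" where
  "checkerboard_copula n M \<longleftrightarrow>
     (\<forall>i<n. \<forall>j<n. M i j \<ge> 0) \<and>
     (\<forall>i<n. (\<Sum>j<n. M i j) = 1 / real n) \<and>
     (\<forall>j<n. (\<Sum>i<n. M i j) = 1 / real n)"

definition Xi :: "nat \<Rightarrow> nat \<Rightarrow> real" where
  "Xi i j = (if i = j then 1 else if i > j then 2 else 0)"

definition mat_mult :: "nat \<Rightarrow> (nat \<Rightarrow> nat \<Rightarrow> real) \<Rightarrow> (nat \<Rightarrow> nat \<Rightarrow> real) \<Rightarrow> (nat \<Rightarrow> nat \<Rightarrow> real)" where
  "mat_mult n A B = (\<lambda>i k. \<Sum>j<n. A i j * B j k)"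

definition mat_transpose :: "(nat \<Rightarrow> nat \<Rightarrow> real) \<Rightarrow> (nat \<Rightarrow> nat \<Rightarrow> real)" where
  "mat_transpose A = (\<lambda>i j. A j i)"

definition mat_trace :: "nat \<Rightarrow> (nat \<Rightarrow> nat \<Rightarrow> real) \<Rightarrow> real" where
  "mat_trace n A = (\<Sum>i<n. A i i)"

definition kendall_tau :: "nat \<Rightarrow> (nat \<Rightarrow> nat \<Rightarrow> real) \<Rightarrow> real" where
  "kendall_tau n M =
     1 - mat_trace n (mat_mult n (mat_mult n (mat_mult n Xi M) Xi) (mat_transpose M))"

definition comonotone :: "nat \<Rightarrow> nat \<Rightarrow> nat \<Rightarrow> real" where
  "comonotone n = (\<lambda>i j. if i = j then 1 / real n else 0)"

end

theory Submission
  imports Defs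
begin

text \<open>
  Write T(A, C) = trace (Xi A Xi C^T), so that tau M = 1 - T(M, M). By bilinearity,
  tau (\<alpha> R + (1 - \<alpha>) P) = 1 - (\<alpha>^2 r + 2 \<alpha> (1 - \<alpha>) q + (1 - \<alpha>)^2 p) with r = T(R, R),
  q = T(R, P) = T(P, R) and p = T(P, P); the symmetry T(P, R) = T(R, P) holds because both margins
  of P are uniform. Such a quadratic is strictly increasing on [0, 1] as soon as r < q \<le> p.

  Since Xi i j = [j \<le> i] + [j < i], every entry of Xi M Xi is a sum of four masses of M on
  blocks of rows below a and columns from b on. By the Frechet lower bound these masses are
  smallest for R, so Xi R Xi \<le> Xi P Xi entrywise and q \<le> p. Finally n T(R, C) is the pairing of
  C with Xi^2, whose symmetrisation is 2 on the diagonal and at least 4 off it; as P \<noteq> R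
  puts mass off the diagonal, q > 1/n = r.
\<close>

definition xi_conj :: "nat \<Rightarrow> (nat \<Rightarrow> nat \<Rightarrow> real) \<Rightarrow> nat \<Rightarrow> nat \<Rightarrow> real" where
  "xi_conj n M = mat_mult n (mat_mult n Xi M) Xi"

definition tau_form :: "nat \<Rightarrow> (nat \<Rightarrow> nat \<Rightarrow> real) \<Rightarrow> (nat \<Rightarrow> nat \<Rightarrow> real) \<Rightarrow> real" where
  "tau_form n A C = (\<Sum>i<n. \<Sum>l<n. xi_conj n A i l * C i l)"

lemma xi_conj_eq: "xi_conj n M i l = (\<Sum>j<n. \<Sum>k<n. Xi i j * M j k * Xi k l)"
  unfolding xi_conj_def mat_mult_def
  by (simp add: sum_distrib_right) (rule sum.swap)

lemma kendall_tau_eq_tau_form: "kendall_tau n M = 1 - tau_form n M M"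
  unfolding kendall_tau_def mat_trace_def tau_form_def xi_conj_def
  by (simp add: mat_mult_def mat_transpose_def)

lemma xi_conj_lincomb:
  "xi_conj n (\<lambda>i j. a * A i j + b * B i j) i l = a * xi_conj n A i l + b * xi_conj n B i l"
  unfolding xi_conj_eq by (simp add: algebra_simps sum.distrib sum_distrib_left)

lemma tau_form_lincomb_left:
  "tau_form n (\<lambda>i j. a * A i j + b * B i j) C = a * tau_form n A C + b * tau_form n B C"
  unfolding tau_form_def xi_conj_lincomb by (simp add: algebra_simps sum.distrib sum_distrib_left)

lemma tau_form_lincomb_right:
  "tau_form n A (\<lambda>i j. a * B i j + b * C i j) = a * tau_form n A B + b * tau_form n A C"
  unfolding tau_form_def by (simp add: algebra_simps sum.distrib sum_distrib_left)

lemma kendall_tau_lincomb: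
  "kendall_tau n (\<lambda>i j. \<alpha> * A i j + (1 - \<alpha>) * B i j)
     = 1 - (\<alpha>^2 * tau_form n A A + \<alpha> * (1 - \<alpha>) * (tau_form n A B + tau_form n B A)
            + (1 - \<alpha>)^2 * tau_form n B B)"
  unfolding kendall_tau_eq_tau_form tau_form_lincomb_left tau_form_lincomb_right
  by (simp add: algebra_simps power2_eq_square)

lemma checkerboard_copula_nonneg: "checkerboard_copula n P \<Longrightarrow> i < n \<Longrightarrow> j < n \<Longrightarrow> 0 \<le> P i j"
  unfolding checkerboard_copula_def by blast

lemma checkerboard_copula_row_sum: "checkerboard_copula n P \<Longrightarrow> i < n \<Longrightarrow> (\<Sum>j<n. P i j) = 1 / real n"
  unfolding checkerboard_copula_def by blast

lemma checkerboard_copula_col_sum: "checkerboard_copula n P \<Longrightarrow> j < n \<Longrightarrow> (\<Sum>i<n. P i j) = 1 / real n"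
  unfolding checkerboard_copula_def by blast

lemma checkerboard_copula_total_mass:
  "checkerboard_copula n P \<Longrightarrow> 0 < n \<Longrightarrow> (\<Sum>j<n. \<Sum>k<n. P j k) = 1"
  by (simp add: checkerboard_copula_row_sum)

lemma checkerboard_copula_marginals_eq:
  assumes "checkerboard_copula n P"
  shows "(\<Sum>j<n. \<Sum>k<n. f k * P j k) = (\<Sum>j<n. \<Sum>k<n. f j * P j k)"
proof -
  have "(\<Sum>j<n. \<Sum>k<n. f k * P j k) = (\<Sum>k<n. f k * (\<Sum>j<n. P j k))"
    by (subst sum.swap) (simp add: sum_distrib_left)
  also have "\<dots> = (\<Sum>j<n. f j * (\<Sum>k<n. P j k))"
    using assms by (simp add: checkerboard_copula_row_sum checkerboard_copula_col_sum)
  also have "\<dots> = (\<Sum>j<n. \<Sum>k<n. f j * P j k)"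
    by (simp add: sum_distrib_left)
  finally show ?thesis .
qed

lemma sum_lessThan_if_between:
  "(\<Sum>j<n. if b \<le> j \<and> j < a then c else 0) = real (min a n - b) * (c :: real)"
  by (induction n) (auto simp: min_def algebra_simps of_nat_diff le_Suc_eq)

definition block_mass :: "nat \<Rightarrow> (nat \<Rightarrow> nat \<Rightarrow> real) \<Rightarrow> nat \<Rightarrow> nat \<Rightarrow> real" where
  "block_mass n M a b = (\<Sum>j<n. \<Sum>k<n. if j < a \<and> b \<le> k then M j k else 0)"

lemma xi_conj_block_mass:
  "xi_conj n M i l = block_mass n M (Suc i) l + block_mass n M i l
                      + block_mass n M (Suc i) (Suc l) + block_mass n M i (Suc l)"
  unfolding xi_conj_eq block_mass_def
  by (simp only: sum.distrib[symmetric]) (intro sum.cong refl, auto simp: Xi_def)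

lemma block_mass_nonneg: "checkerboard_copula n P \<Longrightarrow> 0 \<le> block_mass n P a b"
  unfolding block_mass_def by (intro sum_nonneg) (auto simp: checkerboard_copula_nonneg)

lemma block_mass_lower_bound:
  assumes P: "checkerboard_copula n P" and "a \<le> n"
  shows "(real a - real b) / real n \<le> block_mass n P a b"
proof -
  have split: "block_mass n P a b = (\<Sum>j<n. \<Sum>k<n. if j < a then P j k else 0)
      - (\<Sum>j<n. \<Sum>k<n. if j < a \<and> k < b then P j k else 0)"
    unfolding block_mass_def sum_subtractf[symmetric] by (intro sum.cong refl) auto
  have "(\<Sum>j<n. \<Sum>k<n. if j < a then P j k else 0)
          = (\<Sum>j<n. if 0 \<le> j \<and> j < a then 1 / real n else 0)"
    by (intro sum.cong refl) (auto simp: checkerboard_copula_row_sum[OF P])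
  also have "\<dots> = real a / real n"
    using \<open>a \<le> n\<close> by (simp only: sum_lessThan_if_between) (simp add: min_def)
  finally have rows: "(\<Sum>j<n. \<Sum>k<n. if j < a then P j k else 0) = real a / real n" .
  have "(\<Sum>j<n. \<Sum>k<n. if j < a \<and> k < b then P j k else 0)
          \<le> (\<Sum>j<n. \<Sum>k<n. if k < b then P j k else 0)"
    by (intro sum_mono) (auto simp: checkerboard_copula_nonneg[OF P])
  also have "\<dots> = (\<Sum>k<n. \<Sum>j<n. if k < b then P j k else 0)"
    by (rule sum.swap)
  also have "\<dots> = (\<Sum>k<n. if 0 \<le> k \<and> k < b then 1 / real n else 0)"
    by (intro sum.cong refl) (auto simp: checkerboard_copula_col_sum[OF P])
  also have "\<dots> \<le> real b / real n"
    by (simp only: sum_lessThan_if_between) (simp add: divide_right_mono)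
  finally have cols:
    "(\<Sum>j<n. \<Sum>k<n. if j < a \<and> k < b then P j k else 0) \<le> real b / real n" .
  show ?thesis
    using split rows cols by (simp add: diff_divide_distrib)
qed

lemma block_mass_comonotone:
  assumes "a \<le> n"
  shows "block_mass n (comonotone n) a b = real (a - b) / real n"
proof -
  have "block_mass n (comonotone n) a b = (\<Sum>j<n. if b \<le> j \<and> j < a then 1 / real n else 0)"
    unfolding block_mass_def
  proof (intro sum.cong refl)
    fix j assume "j \<in> {..<n}"
    have "(\<lambda>k. if j < a \<and> b \<le> k then comonotone n j k else 0)
            = (\<lambda>k. if k = j then (if b \<le> j \<and> j < a then 1 / real n else 0) else 0)"
      by (auto simp: comonotone_def)
    then show "(\<Sum>k<n. if j < a \<and> b \<le> k then comonotone n j k else 0)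
            = (if b \<le> j \<and> j < a then 1 / real n else 0)"
      using \<open>j \<in> {..<n}\<close> by (simp only:) simp
  qed
  also have "\<dots> = real (a - b) / real n"
    using assms by (simp add: sum_lessThan_if_between min_def)
  finally show ?thesis .
qed

lemma block_mass_ge_comonotone:
  assumes "checkerboard_copula n P" and "a \<le> n"
  shows "block_mass n (comonotone n) a b \<le> block_mass n P a b"
proof (cases "b \<le> a")
  case True
  then show ?thesis
    using block_mass_lower_bound[OF assms] block_mass_comonotone[OF assms(2)] by (simp add: of_nat_diff)
next
  case False
  then show ?thesis
    using block_mass_nonneg[OF assms(1)] block_mass_comonotone[OF assms(2)] by simp
qed

lemma xi_conj_ge_comonotone:
  assumes "checkerboard_copula n P" and "i < n"
  shows "xi_conj n (comonotone n) i l \<le> xi_conj n P i l"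
  unfolding xi_conj_block_mass using assms by (intro add_mono block_mass_ge_comonotone) auto

lemma tau_form_comonotone_le:
  assumes P: "checkerboard_copula n P"
  shows "tau_form n (comonotone n) P \<le> tau_form n P P"
  unfolding tau_form_def
  by (intro sum_mono mult_right_mono xi_conj_ge_comonotone[OF P])
    (auto simp: checkerboard_copula_nonneg[OF P])

definition xi_square :: "nat \<Rightarrow> nat \<Rightarrow> nat" where
  "xi_square i l = (if i = l then 1 else if l < i then 4 * (i - l) else 0)"

lemma xi_conj_comonotone:
  assumes "i < n"
  shows "xi_conj n (comonotone n) i l = real (xi_square i l) / real n"
proof -
  have "(Suc i - l) + (i - l) + (Suc i - Suc l) + (i - Suc l) = xi_square i l"
    by (auto simp: xi_square_def)
  then show ?thesis
    using assms
    by (simp add: xi_conj_block_mass block_mass_comonotone add_divide_distrib[symmetric] flip: of_nat_add)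
qed

lemma sum_mult_comonotone: "i < n \<Longrightarrow> (\<Sum>l<n. f l * comonotone n i l) = f i / real n"
  by (simp add: comonotone_def if_distrib[where f = "\<lambda>x. _ * x"] cong: if_cong)

lemma mat_mult_comonotone_right: "j < n \<Longrightarrow> mat_mult n A (comonotone n) i j = A i j / real n"
  by (simp add: mat_mult_def comonotone_def if_distrib[where f = "\<lambda>x. _ * x"] cong: if_cong)

lemma mat_mult_Xi_Xi:
  assumes "i < n"
  shows "mat_mult n Xi Xi i l = real (xi_square i l)"
proof -
  have "xi_conj n (comonotone n) i l = mat_mult n Xi Xi i l / real n"
    unfolding xi_conj_def mat_mult_def[of n "mat_mult n Xi (comonotone n)"] mat_mult_def[of n Xi Xi]
    by (simp add: mat_mult_comonotone_right sum_divide_distrib)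
  with xi_conj_comonotone[OF assms] assms show ?thesis by simp
qed

lemma tau_form_comonotone_left:
  "tau_form n (comonotone n) C = (\<Sum>i<n. \<Sum>l<n. real (xi_square i l) * C i l) / real n"
  unfolding tau_form_def sum_divide_distrib by (intro sum.cong refl) (simp add: xi_conj_comonotone)

lemma tau_form_comonotone_right:
  "tau_form n C (comonotone n) = (\<Sum>j<n. \<Sum>k<n. real (xi_square k j) * C j k) / real n"
proof -
  have "tau_form n C (comonotone n) = (\<Sum>i<n. xi_conj n C i i) / real n"
    unfolding tau_form_def sum_divide_distrib by (intro sum.cong refl) (simp add: sum_mult_comonotone)
  also have "(\<Sum>i<n. xi_conj n C i i) = (\<Sum>i<n. \<Sum>j<n. \<Sum>k<n. C j k * (Xi k i * Xi i j))"
    unfolding xi_conj_eq by (intro sum.cong refl) (simp add: mult_ac)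
  also have "\<dots> = (\<Sum>j<n. \<Sum>k<n. C j k * mat_mult n Xi Xi k j)"
    unfolding mat_mult_def sum_distrib_left
    by (subst sum.swap) (rule sum.cong[OF refl], rule sum.swap)
  also have "\<dots> = (\<Sum>j<n. \<Sum>k<n. real (xi_square k j) * C j k)"
    by (intro sum.cong refl) (simp add: mat_mult_Xi_Xi)
  finally show ?thesis .
qed

lemma xi_square_antisym: "real (xi_square i l) - real (xi_square l i) = 4 * (real i - real l)"
  by (auto simp: xi_square_def of_nat_diff)

lemma two_le_xi_square_add_swap: "2 \<le> xi_square i l + xi_square l i"
  by (auto simp: xi_square_def)

lemma four_le_xi_square_add_swap: "i \<noteq> l \<Longrightarrow> 4 \<le> xi_square i l + xi_square l i"
  by (auto simp: xi_square_def)

lemma tau_form_comonotone_commute: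
  assumes "checkerboard_copula n P"
  shows "tau_form n P (comonotone n) = tau_form n (comonotone n) P"
proof -
  have "(\<Sum>j<n. \<Sum>k<n. real (xi_square k j) * P j k) - (\<Sum>j<n. \<Sum>k<n. real (xi_square j k) * P j k)
      = (\<Sum>j<n. \<Sum>k<n. (real (xi_square k j) - real (xi_square j k)) * P j k)"
    by (simp add: sum_subtractf left_diff_distrib)
  also have "\<dots> = 4 * ((\<Sum>j<n. \<Sum>k<n. real k * P j k) - (\<Sum>j<n. \<Sum>k<n. real j * P j k))"
    by (simp add: xi_square_antisym sum_subtractf sum_distrib_left algebra_simps)
  also have "\<dots> = 0"
    using checkerboard_copula_marginals_eq[OF assms, of real] by simp
  finally show ?thesis
    unfolding tau_form_comonotone_left tau_form_comonotone_right by (simp add: diff_divide_distrib[symmetric])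
qed

lemma tau_form_comonotone_comonotone:
  assumes "0 < n"
  shows "tau_form n (comonotone n) (comonotone n) = 1 / real n"
proof -
  have "(\<Sum>i<n. \<Sum>l<n. real (xi_square i l) * comonotone n i l) = 1"
    using assms by (simp add: sum_mult_comonotone xi_square_def)
  then show ?thesis by (simp add: tau_form_comonotone_left)
qed

lemma tau_form_comonotone_gt:
  assumes P: "checkerboard_copula n P" and jk: "j < n" "k < n" "j \<noteq> k" "0 < P j k"
  shows "tau_form n (comonotone n) (comonotone n) < tau_form n (comonotone n) P"
proof -
  have "0 < n" using jk by simp
  define w where "w i l = (real (xi_square i l + xi_square l i) - 2) * P i l" for i l
  have w_nonneg: "0 \<le> w i l" if "i < n" "l < n" for i l
    using two_le_xi_square_add_swap[of i l] checkerboard_copula_nonneg[OF P that]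
    unfolding w_def by (intro mult_nonneg_nonneg) linarith+
  have w_pos: "0 < w j k"
    using four_le_xi_square_add_swap[OF jk(3)] jk(4) unfolding w_def by (intro mult_pos_pos) linarith+
  have "0 < (\<Sum>j<n. \<Sum>k<n. w j k)"
    by (rule sum_pos2[where i = j])
      (use jk w_pos w_nonneg in \<open>auto intro!: sum_pos2[where i = k] sum_nonneg\<close>)
  also have "(\<Sum>j<n. \<Sum>k<n. w j k) = (\<Sum>j<n. \<Sum>k<n. real (xi_square j k) * P j k)
      + (\<Sum>j<n. \<Sum>k<n. real (xi_square k j) * P j k) - 2 * (\<Sum>j<n. \<Sum>k<n. P j k)"
    unfolding w_def by (simp add: algebra_simps sum.distrib sum_subtractf sum_distrib_left)
  also have "\<dots> = real n * (2 * tau_form n (comonotone n) P) - 2"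
    using tau_form_comonotone_commute[OF P] \<open>0 < n\<close>
    by (simp add: tau_form_comonotone_left tau_form_comonotone_right checkerboard_copula_total_mass[OF P])
  finally show ?thesis
    using \<open>0 < n\<close> by (simp add: tau_form_comonotone_comonotone field_simps)
qed

lemma checkerboard_copula_offdiag_pos:
  assumes P: "checkerboard_copula n P" and "\<exists>i<n. \<exists>j<n. P i j \<noteq> comonotone n i j"
  shows "\<exists>j<n. \<exists>k<n. j \<noteq> k \<and> 0 < P j k"
proof (rule ccontr)
  assume "\<not> ?thesis"
  then have off: "P j k = 0" if "j < n" "k < n" "j \<noteq> k" for j k
    using checkerboard_copula_nonneg[OF P that(1,2)] that by force
  have diag: "P j j = 1 / real n" if "j < n" for j
  proof -
    have "(\<Sum>k<n. P j k) = (\<Sum>k<n. if k = j then P j j else 0)"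
      by (intro sum.cong refl) (use off that in auto)
    then show ?thesis
      using checkerboard_copula_row_sum[OF P that] that by simp
  qed
  have "P i j = comonotone n i j" if "i < n" "j < n" for i j
    using off[OF that] diag[OF that(1)] by (auto simp: comonotone_def)
  with assms(2) show False by blast
qed

lemma strict_mono_on_interpolation:
  fixes r q p :: real
  assumes "r < q" and "q \<le> p"
  shows "strict_mono_on {0..1}
           (\<lambda>\<alpha>. 1 - (\<alpha>^2 * r + \<alpha> * (1 - \<alpha>) * (q + q) + (1 - \<alpha>)^2 * p))"
proof (rule strict_mono_onI)
  fix a b :: real
  assume "a \<in> {0..1}" "b \<in> {0..1}" "a < b"
  then have "0 < (b - a) * ((2 - (a + b)) * (p - q) + (a + b) * (q - r))"
    using assms by (intro mult_pos_pos add_nonneg_pos mult_nonneg_nonneg) auto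
  then show "1 - (a^2 * r + a * (1 - a) * (q + q) + (1 - a)^2 * p)
           < 1 - (b^2 * r + b * (1 - b) * (q + q) + (1 - b)^2 * p)"
    by (simp add: algebra_simps power2_eq_square)
qed

theorem lemma11:
  fixes n :: nat and P :: "nat \<Rightarrow> nat \<Rightarrow> real"
  assumes "n \<ge> 2"
    and "checkerboard_copula n P"
    and "\<exists>i<n. \<exists>j<n. P i j \<noteq> comonotone n i j"
  shows "strict_mono_on {0..1::real}
           (\<lambda>\<alpha>. kendall_tau n (\<lambda>i j. \<alpha> * comonotone n i j + (1 - \<alpha>) * P i j))"
proof -
  obtain j k where "j < n" "k < n" "j \<noteq> k" "0 < P j k"
    using checkerboard_copula_offdiag_pos[OF assms(2,3)] by blast
  then have "tau_form n (comonotone n) (comonotone n) < tau_form n (comonotone n) P"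
    by (rule tau_form_comonotone_gt[OF assms(2)])
  moreover have "tau_form n (comonotone n) P \<le> tau_form n P P"
    by (rule tau_form_comonotone_le[OF assms(2)])
  ultimately show ?thesis
    unfolding kendall_tau_lincomb tau_form_comonotone_commute[OF assms(2)]
    by (rule strict_mono_on_interpolation)
qed

end
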